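(* Let $G=(V,E)$ be a graph, let $c\ge1$ and $\epsilon\in[0,1/3)$, and let $\kappa(G)=(V,\kappa(E))$ be an $(\epsilon,c)$-kernel of $G$. If $M$ is a matching in $\kappa(G)$ such that every augmenting path in $\kappa(G)$ with respect to $M$ has length at least five, then the size of a maximum matching in $G$ is at most $(3+3\epsilon)|M|$.
   Context: Let $\mathcal N_v$ denote the set of neighbors of $v$ in $G$. A subgraph $\kappa(G)=(V,\kappa(E))$ with $\kappa(E)\subseteq E$ is given, together with a partition of $V$ into tight nodes $\kappa_T(V)$ and slack nodes $\kappa_S(V)$. For $v\in V$ let $\kappa(\mathcal N_v)=\{u\in\mathcal N_v:(u,v)\in\kappa(E)\}$ (the friends of $v$). For $c\ge1$ and $\epsilon\in[0,1/3)$, $\kappa(G)$ is an $(\epsilon,c)$-kernel of $G$ (w.r.t. this partition) iff: (i) $|\kappa(\mathcal N_v)|\le(1+\epsilon)c$ for all $v\in V$; (ii) $|\kappa(\mathcal N_v)|\ge(1-\epsilon)c$ for all $v\in\kappa_T(V)$; (iii) for all $u,v\in\kappa_S(V)$, if $(u,v)\in E$ then $(u,v)\in\kappa(E)$. Given a matching $M$ in a graph $H$, an augmenting path of length $2k+1$ ($k \ge 0$) is a simple path in $H$ with $2k+1$ edges whose two end nodes are unmatched in $M$ and whose edges alternate between non-$M$ and $M$ edges (first and last edges not in $M$). *)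

theory Defs
  imports Complex_Main
begin

definition graph :: "'a set \<Rightarrow> 'a set set \<Rightarrow> bool" where
  "graph V E \<longleftrightarrow> finite V \<and> (\<forall>e\<in>E. \<exists>u v. e = {u, v} \<and> u \<noteq> v \<and> u \<in> V \<and> v \<in> V)"

definition matching :: "'a set set \<Rightarrow> 'a set set \<Rightarrow> bool" where
  "matching E M \<longleftrightarrow> M \<subseteq> E \<and> (\<forall>e1\<in>M. \<forall>e2\<in>M. e1 \<noteq> e2 \<longrightarrow> e1 \<inter> e2 = {})"

definition max_matching_size :: "'a set set \<Rightarrow> nat" where
  "max_matching_size E = Max (card ` {M. matching E M})"

definition matched :: "'a set set \<Rightarrow> 'a \<Rightarrow> bool" where
  "matched M v \<longleftrightarrow> (\<exists>e\<in>M. v \<in> e)"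

text \<open>An augmenting path w.r.t. matching M in the graph with edge set H, given as the
  list of its vertices v_0, ..., v_{2k+1}; its length is the number of edges, length p - 1.\<close>
definition augmenting_path :: "'a set set \<Rightarrow> 'a set set \<Rightarrow> 'a list \<Rightarrow> bool" where
  "augmenting_path H M p \<longleftrightarrow>
     distinct p \<and> odd (length p - 1) \<and>
     (\<forall>i < length p - 1. {p ! i, p ! Suc i} \<in> H) \<and>
     \<not> matched M (hd p) \<and> \<not> matched M (last p) \<and>
     (\<forall>i < length p - 1. ({p ! i, p ! Suc i} \<in> M \<longleftrightarrow> odd i))"

definition friends :: "'a set set \<Rightarrow> 'a set \<Rightarrow> 'a \<Rightarrow> 'a set" where
  "friends KE V v = {u \<in> V. {u, v} \<in> KE}"

text \<open>(\<epsilon>,c)-kernel KE of the graph (V,E) w.r.t. the partition of V into tight nodes T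
  and slack nodes S.\<close>
definition kernel :: "real \<Rightarrow> real \<Rightarrow> 'a set \<Rightarrow> 'a set set \<Rightarrow> 'a set set \<Rightarrow> 'a set \<Rightarrow> 'a set \<Rightarrow> bool" where
  "kernel \<epsilon> c V E KE T S \<longleftrightarrow>
     KE \<subseteq> E \<and> T \<union> S = V \<and> T \<inter> S = {} \<and>
     (\<forall>v\<in>V. real (card (friends KE V v)) \<le> (1 + \<epsilon>) * c) \<and>
     (\<forall>v\<in>T. real (card (friends KE V v)) \<ge> (1 - \<epsilon>) * c) \<and>
     (\<forall>u\<in>S. \<forall>v\<in>S. {u, v} \<in> E \<longrightarrow> {u, v} \<in> KE)"

end

theory Submission
  imports Defs
begin

text \<open>Let W be the set of M-matched vertices and U the unmatched tight vertices. Since there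
  is no augmenting path of length one, an edge of G between two unmatched slack vertices would
  lie in the kernel and be such a path; so W \<union> U is a vertex cover of G and every matching of G
  has at most |W| + |U| \<le> 2|M| + |U| edges. To bound |U|, count kernel edges between U and W:
  each u \<in> U has at least (1 - \<epsilon>)c friends, all in W. For an edge {a, b} of M, absence of
  augmenting paths of length three means that a and b cannot have distinct friends in U; so
  either one of them has none, and the other has at most (1 + \<epsilon>)c - 1 (b itself is a friend
  of a), or both have the same single one. Hence |U|(1 - \<epsilon>)c \<le> |M|(1 + \<epsilon>)c, which gives
  |U| \<le> (1 + 3\<epsilon>)|M| for \<epsilon> < 1/3.\<close>

lemma graph_edgeD:
  assumes "graph V E" "{u, v} \<in> E"
  shows "u \<noteq> v" "u \<in> V" "v \<in> V"
proof -
  obtain a b where "{u, v} = {a, b}" "a \<noteq> b" "a \<in> V" "b \<in> V"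
    using assms unfolding graph_def by blast
  then show "u \<noteq> v" "u \<in> V" "v \<in> V" by (auto simp: doubleton_eq_iff)
qed

lemma graph_edgeE:
  assumes "graph V E" "e \<in> E"
  obtains u v where "e = {u, v}" "u \<noteq> v" "u \<in> V" "v \<in> V"
  using assms unfolding graph_def by blast

lemma graph_finite_edges:
  assumes "graph V E"
  shows "finite E"
proof (rule finite_subset)
  show "E \<subseteq> Pow V" using assms by (auto elim: graph_edgeE)
  show "finite (Pow V)" using assms by (simp add: graph_def)
qed

lemma matched_iff_in_Union [simp]: "matched M v \<longleftrightarrow> v \<in> \<Union>M"
  by (auto simp: matched_def)

lemma max_matching_size_obtain:
  assumes "graph V E"
  obtains N where "matching E N" "max_matching_size E = card N"
proof -
  have "finite {N. matching E N}"
    using graph_finite_edges[OF assms] by (auto simp: matching_def)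
  moreover have "{} \<in> {N. matching E N}" by (simp add: matching_def)
  ultimately have "max_matching_size E \<in> card ` {N. matching E N}"
    unfolding max_matching_size_def by (intro Max_in) auto
  then show ?thesis using that by blast
qed

lemma card_matched_vertices_le:
  assumes "graph V E" "matching E M"
  shows "card (\<Union>M) \<le> 2 * card M"
proof -
  have "card (\<Union>M) \<le> (\<Sum>e\<in>M. card e)" by (rule card_Union_le_sum_card)
  also have "\<dots> = (\<Sum>e\<in>M. 2)"
    using assms by (intro sum.cong) (auto simp: matching_def elim: graph_edgeE)
  finally show ?thesis by simp
qed

lemma matching_card_le_vertex_cover:
  assumes "matching E N" "finite C" "\<And>e. e \<in> N \<Longrightarrow> e \<inter> C \<noteq> {}"
  shows "card N \<le> card C"
proof -
  define f where "f e = (SOME x. x \<in> e \<inter> C)" for e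
  have f: "f e \<in> e \<inter> C" if "e \<in> N" for e
    using assms(3)[OF that] unfolding f_def by (metis equals0I someI_ex)
  have "inj_on f N"
  proof (rule inj_onI)
    fix e1 e2 assume "e1 \<in> N" "e2 \<in> N" "f e1 = f e2"
    then have "f e1 \<in> e1 \<inter> e2" using f[of e1] f[of e2] by simp
    with \<open>e1 \<in> N\<close> \<open>e2 \<in> N\<close> assms(1) show "e1 = e2" unfolding matching_def by blast
  qed
  moreover have "f ` N \<subseteq> C" using f by blast
  ultimately show ?thesis using assms(2) by (rule card_inj_on_le)
qed

lemma augmenting_path_length_one:
  assumes "{u, v} \<in> H" "u \<noteq> v" "\<not> matched M u" "\<not> matched M v"
  shows "augmenting_path H M [u, v]"
  using assms by (auto simp: augmenting_path_def matched_def)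

lemma augmenting_path_length_three:
  assumes "{u, a} \<in> H" "{a, b} \<in> H" "{b, w} \<in> H" "{a, b} \<in> M"
    and "distinct [u, a, b, w]" "\<not> matched M u" "\<not> matched M w"
  shows "augmenting_path H M [u, a, b, w]"
proof -
  have "{u, a} \<notin> M" "{b, w} \<notin> M" using assms(6,7) by (auto simp: matched_def)
  with assms show ?thesis
    by (auto simp: augmenting_path_def less_Suc_eq nth_Cons split: nat.splits)
qed

lemma matched_or_tight_vertex_cover:
  assumes "graph V E" "kernel \<epsilon> c V E KE T S"
    and no_short: "\<And>p. augmenting_path KE M p \<Longrightarrow> 5 \<le> length p - 1"
    and "e \<in> E"
  shows "e \<inter> (\<Union>M \<union> T) \<noteq> {}"
proof
  assume uncovered: "e \<inter> (\<Union>M \<union> T) = {}"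
  obtain u v where uv: "e = {u, v}" "u \<noteq> v" "u \<in> V" "v \<in> V"
    using assms(1,4) by (rule graph_edgeE)
  with uncovered assms(2) have "u \<in> S" "v \<in> S" by (auto simp: kernel_def)
  with assms(2,4) uv have "{u, v} \<in> KE" by (auto simp: kernel_def)
  with uv uncovered have "augmenting_path KE M [u, v]"
    by (intro augmenting_path_length_one) auto
  then show False using no_short by fastforce
qed

lemma friends_of_unmatched_are_matched:
  assumes "graph V E" "KE \<subseteq> E" "\<not> matched M u"
    and no_short: "\<And>p. augmenting_path KE M p \<Longrightarrow> 5 \<le> length p - 1"
  shows "friends KE V u = {x \<in> \<Union>M. {u, x} \<in> KE}"
proof -
  have "x \<in> \<Union>M \<and> x \<in> V" if ux: "{u, x} \<in> KE" for x
  proof -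
    have "{u, x} \<in> E" using ux assms(2) by blast
    note edge = graph_edgeD[OF assms(1) this]
    have "x \<in> \<Union>M"
    proof (rule ccontr)
      assume "x \<notin> \<Union>M"
      then have "augmenting_path KE M [u, x]"
        using ux edge(1) assms(3) by (intro augmenting_path_length_one) auto
      then show False using no_short by fastforce
    qed
    then show ?thesis using edge(3) by blast
  qed
  then show ?thesis unfolding friends_def insert_commute[of _ u] by blast
qed

lemma card_unmatched_friends_add_one_le:
  assumes "graph V E" "kernel \<epsilon> c V E KE T S" "matching KE M"
    and "{a, b} \<in> M" "U \<inter> \<Union>M = {}"
  shows "real (card {u \<in> U \<inter> V. {u, a} \<in> KE}) + 1 \<le> (1 + \<epsilon>) * c"
proof -
  have KE: "KE \<subseteq> E" "{a, b} \<in> KE" using assms(2-4) by (auto simp: kernel_def matching_def)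
  then have "{a, b} \<in> E" by blast
  note ab = graph_edgeD[OF assms(1) this]
  have ba: "{b, a} \<in> KE" using KE(2) by (simp add: insert_commute)
  have friends_a: "friends KE V a = {u \<in> V. {u, a} \<in> KE}" by (simp add: friends_def)
  have finite_friends: "finite (friends KE V a)" using assms(1) by (simp add: graph_def friends_def)
  have "b \<notin> U" using assms(4,5) by blast
  then have "card {u \<in> U \<inter> V. {u, a} \<in> KE} + 1 = card (insert b {u \<in> U \<inter> V. {u, a} \<in> KE})"
    using finite_subset[OF _ finite_friends] by (simp add: friends_a subset_iff)
  also have "\<dots> \<le> card (friends KE V a)"
    using ba ab(3) by (intro card_mono[OF finite_friends]) (auto simp: friends_a)
  also have "real \<dots> \<le> (1 + \<epsilon>) * c" using ab(2) assms(2) unfolding kernel_def by blast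
  finally show ?thesis by simp
qed

lemma unmatched_friends_of_matching_edge_unique:
  assumes "matching KE M" "{a, b} \<in> M" "a \<noteq> b" "U \<inter> \<Union>M = {}"
    and no_short: "\<And>p. augmenting_path KE M p \<Longrightarrow> 5 \<le> length p - 1"
    and "u \<in> U" "{u, a} \<in> KE" "w \<in> U" "{w, b} \<in> KE"
  shows "u = w"
proof (rule ccontr)
  assume "u \<noteq> w"
  moreover have "a \<in> \<Union>M" "b \<in> \<Union>M" "u \<notin> \<Union>M" "w \<notin> \<Union>M" using assms(2,4,6,8) by auto
  moreover have "{a, b} \<in> KE" "{b, w} \<in> KE"
    using assms(1,2,9) by (auto simp: matching_def insert_commute)
  ultimately have "augmenting_path KE M [u, a, b, w]"
    using assms(2,3,7) by (intro augmenting_path_length_three) auto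
  then show False using no_short by fastforce
qed

lemma unmatched_friends_of_matching_edge:
  assumes "graph V E" "kernel \<epsilon> c V E KE T S" "matching KE M"
    and no_short: "\<And>p. augmenting_path KE M p \<Longrightarrow> 5 \<le> length p - 1"
    and "e \<in> M" "U \<subseteq> V" "U \<inter> \<Union>M = {}"
  shows "real (\<Sum>x\<in>e. card {u \<in> U. {u, x} \<in> KE}) \<le> (1 + \<epsilon>) * c"
proof -
  have "e \<in> E" using assms(2,3,5) by (auto simp: kernel_def matching_def)
  then obtain a b where ab: "e = {a, b}" "a \<noteq> b" using assms(1) by (auto elim: graph_edgeE)
  define A where "A x = {u \<in> U. {u, x} \<in> KE}" for x
  have A: "A x = {u \<in> U \<inter> V. {u, x} \<in> KE}" for x using assms(6) by (auto simp: A_def)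
  have ab_M: "{a, b} \<in> M" "{b, a} \<in> M" using assms(5) ab(1) by (simp_all add: insert_commute)
  have bound_a: "real (card (A a)) + 1 \<le> (1 + \<epsilon>) * c"
    unfolding A by (rule card_unmatched_friends_add_one_le[OF assms(1-3) ab_M(1) assms(7)])
  have bound_b: "real (card (A b)) + 1 \<le> (1 + \<epsilon>) * c"
    unfolding A by (rule card_unmatched_friends_add_one_le[OF assms(1-3) ab_M(2) assms(7)])
  have "card (A a) + card (A b) \<le> (1 + \<epsilon>) * c"
  proof (cases "A a = {} \<or> A b = {}")
    case True
    then show ?thesis using bound_a bound_b by auto
  next
    case False
    then obtain u w where "u \<in> A a" "w \<in> A b" by blast
    then have "A a = {u}" "A b = {u}"
      using unmatched_friends_of_matching_edge_unique[OF assms(3) ab_M(1) ab(2) assms(7) no_short]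
      unfolding A_def by blast+
    then show ?thesis using bound_a by simp
  qed
  then show ?thesis using ab by (simp add: A_def)
qed

lemma card_unmatched_tight_bound:
  assumes "graph V E" "kernel \<epsilon> c V E KE T S" "matching KE M"
    and no_short: "\<And>p. augmenting_path KE M p \<Longrightarrow> 5 \<le> length p - 1"
  shows "real (card (T - \<Union>M)) * ((1 - \<epsilon>) * c) \<le> real (card M) * ((1 + \<epsilon>) * c)"
proof -
  define U where "U = T - \<Union>M"
  define A where "A x = card {u \<in> U. {u, x} \<in> KE}" for x
  have KE: "KE \<subseteq> E" "M \<subseteq> KE" using assms(2,3) by (auto simp: kernel_def matching_def)
  have "finite V" using assms(1) by (simp add: graph_def)
  moreover have "U \<subseteq> V" using assms(2) by (auto simp: U_def kernel_def)
  moreover have "\<Union>M \<subseteq> V" using KE assms(1) by (auto elim: graph_edgeE)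
  ultimately have finite: "finite U" "finite (\<Union>M)" by (auto intro: finite_subset)
  have "(\<Sum>u\<in>U. card {x \<in> \<Union>M. {u, x} \<in> KE}) = (\<Sum>x\<in>\<Union>M. A x)"
    unfolding A_def by (rule sum_multicount_gen[OF finite]) simp
  also have "\<dots> = (\<Sum>e\<in>M. \<Sum>x\<in>e. A x)"
    using assms(3) finite(2) by (subst sum.Union_disjoint) (auto simp: matching_def intro: finite_subset)
  finally have double_count: "(\<Sum>u\<in>U. card {x \<in> \<Union>M. {u, x} \<in> KE}) = (\<Sum>e\<in>M. \<Sum>x\<in>e. A x)" .
  have "real (card U) * ((1 - \<epsilon>) * c) \<le> (\<Sum>u\<in>U. real (card (friends KE V u)))"
    using assms(2) by (intro sum_bounded_below) (auto simp: U_def kernel_def)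
  also have "\<dots> = (\<Sum>e\<in>M. real (\<Sum>x\<in>e. A x))"
    using friends_of_unmatched_are_matched[where M = M, OF assms(1) KE(1) _ no_short] double_count
    by (simp add: U_def flip: of_nat_sum)
  also have "\<dots> \<le> (\<Sum>e\<in>M. (1 + \<epsilon>) * c)"
    unfolding A_def using \<open>U \<subseteq> V\<close>
    by (intro sum_mono unmatched_friends_of_matching_edge[OF assms]) (auto simp: U_def)
  finally show ?thesis by (simp add: U_def mult.commute)
qed

lemma le_one_plus_three_eps_mult:
  fixes x y \<epsilon> :: real
  assumes "x * (1 - \<epsilon>) \<le> y * (1 + \<epsilon>)" "0 \<le> y" "0 \<le> \<epsilon>" "\<epsilon> < 1/3"
  shows "x \<le> (1 + 3 * \<epsilon>) * y"
proof -
  have "(1 + 3 * \<epsilon>) * y * (1 - \<epsilon>) - y * (1 + \<epsilon>) = y * (\<epsilon> * (1 - 3 * \<epsilon>))"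
    by (simp add: algebra_simps)
  moreover have "0 \<le> y * (\<epsilon> * (1 - 3 * \<epsilon>))" using assms(2-4) by simp
  ultimately have "y * (1 + \<epsilon>) \<le> (1 + 3 * \<epsilon>) * y * (1 - \<epsilon>)" by linarith
  with assms(1) have "x * (1 - \<epsilon>) \<le> (1 + 3 * \<epsilon>) * y * (1 - \<epsilon>)" by linarith
  with assms(4) show ?thesis by (simp add: mult_le_cancel_right)
qed

theorem theorem3p10:
  fixes V :: "'a set" and E KE M :: "'a set set" and T S :: "'a set" and c \<epsilon> :: real
  assumes "graph V E"
    and "c \<ge> 1" and "0 \<le> \<epsilon>" and "\<epsilon> < 1/3"
    and "kernel \<epsilon> c V E KE T S"
    and "matching KE M"
    and "\<And>p. augmenting_path KE M p \<Longrightarrow> length p - 1 \<ge> 5"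
  shows "real (max_matching_size E) \<le> (3 + 3 * \<epsilon>) * real (card M)"
proof -
  obtain N where N: "matching E N" "max_matching_size E = card N"
    using assms(1) by (rule max_matching_size_obtain)
  have "matching E M" using assms(5,6) by (auto simp: kernel_def matching_def)
  then have matched: "card (\<Union>M) \<le> 2 * card M"
    using assms(1) by (intro card_matched_vertices_le)
  have "(real (card (T - \<Union>M)) * (1 - \<epsilon>)) * c \<le> (real (card M) * (1 + \<epsilon>)) * c"
    using card_unmatched_tight_bound[OF assms(1,5,6,7)] by (simp add: mult.assoc)
  then have unmatched: "real (card (T - \<Union>M)) \<le> (1 + 3 * \<epsilon>) * real (card M)"
    using assms(2-4) by (intro le_one_plus_three_eps_mult) (simp_all add: mult_le_cancel_right)
  have "finite V" "\<Union>M \<union> T \<subseteq> V"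
    using assms(1,5) \<open>matching E M\<close> by (auto simp: graph_def kernel_def matching_def elim: graph_edgeE)
  then have "card N \<le> card (\<Union>M \<union> T)"
    using N(1) matched_or_tight_vertex_cover[OF assms(1,5,7)]
    by (intro matching_card_le_vertex_cover) (auto simp: matching_def intro: finite_subset)
  also have "\<dots> \<le> card (\<Union>M) + card (T - \<Union>M)" by (metis Un_Diff_cancel card_Un_le)
  finally have "real (max_matching_size E) \<le> 2 * real (card M) + (1 + 3 * \<epsilon>) * real (card M)"
    using N(2) matched unmatched by linarith
  then show ?thesis by (simp add: algebra_simps)
qed

end
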